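(* Assume $S\times M\neq\emptyset$, let $(x,\lambda):[t_0,+\infty[\ \to X\times Y$ be a solution of (AHT), and suppose there exists $t_+\ge t_0$ such that $\varepsilon^2(t)+\dot\varepsilon(t)\ge0$ and $2\varepsilon(t)\dot\varepsilon(t)+\ddot\varepsilon(t)\le0$ for all $t\ge t_+$. Then \[ \|(\dot x(t),\dot\lambda(t))\|^2=\mathcal{O}\big(e^{-2\rho(t)}+\varepsilon^2(t)\big)\quad\text{as } t\to+\infty. \]
   Context: $X,Y$ are real Hilbert spaces; $X\times Y$ carries the product inner product and norm $\|\cdot\|$. Standing assumptions: $f:X\to\mathbb{R}$ is convex and continuously differentiable with $\nabla f$ Lipschitz continuous on bounded subsets of $X$; $A:X\to Y$ is linear and continuous with adjoint $A^*$; $b\in Y$; $\varepsilon:[t_0,+\infty[\ \to\ ]0,+\infty[$ ($t_0\ge0$) is twice continuously differentiable with $\lim_{t\to+\infty}\varepsilon(t)=0$. $L(x,\lambda)=f(x)+\langle\lambda,Ax-b\rangle_Y$. $S$ is the set of optimal solutions of $\min\{f(x):Ax=b\}$, $M$ the set of Lagrange multipliers; $S\times M$ is the set of saddle points of $L$. $\rho(t)=\int_{t_0}^t\varepsilon(\tau)\,d\tau$. (AHT) is the system $\dot x+\nabla f(x)+A^*\lambda+\varepsilon(t)x=0$, $\dot\lambda+b-Ax+\varepsilon(t)\lambda=0$; a solution is a continuously differentiable $(x,\lambda):[t_0,+\infty[\ \to X\times Y$ satisfying it on $[t_0,+\infty[$ (existence and uniqueness for every initial datum is assumed). *)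

theory Defs
  imports "HOL-Analysis.Analysis" "HOL-Library.Landau_Symbols"
begin

definition lagrangian ::
  "('a \<Rightarrow> real) \<Rightarrow> ('a \<Rightarrow> 'b::real_inner) \<Rightarrow> 'b \<Rightarrow> 'a \<Rightarrow> 'b \<Rightarrow> real" where
  "lagrangian f A b x l = f x + inner l (A x - b)"

text \<open>Saddle points of L; by the standing assumptions this set equals S x M.\<close>
definition saddle_points ::
  "('a \<Rightarrow> real) \<Rightarrow> ('a \<Rightarrow> 'b::real_inner) \<Rightarrow> 'b \<Rightarrow> ('a \<times> 'b) set" where
  "saddle_points f A b = {(xs, ls). (\<forall>x l. lagrangian f A b xs l \<le> lagrangian f A b xs ls
                                       \<and> lagrangian f A b xs ls \<le> lagrangian f A b x ls)}"

end

theory Submission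
  imports Defs
begin

(* Write Z = (x, \<lambda>) and F (x, \<lambda>) = (\<nabla>f x + A\<^sup>* \<lambda>, b - A x). F is monotone, its zeros are the
   saddle points of L, and (AHT) reads Z' = - F Z - \<epsilon> Z. Monotonicity keeps Z bounded: the
   distance from a zero z of F cannot grow while it exceeds |z|. The key quantity is the energy
   exp (2 \<rho>) (|Z'|\<^sup>2 + \<epsilon>' |Z|\<^sup>2). Formally, monotonicity of F gives
   d/dt |Z'|\<^sup>2 \<le> - 2 \<epsilon> |Z'|\<^sup>2 - 2 \<epsilon>' <Z, Z'>, so the energy has derivative at most
   exp (2 \<rho>) (2 \<epsilon> \<epsilon>' + \<epsilon>'') |Z|\<^sup>2 \<le> 0 after t\<^sub>+. Hence
   |Z'|\<^sup>2 \<le> C exp (- 2 \<rho>) - \<epsilon>' |Z|\<^sup>2 \<le> C exp (- 2 \<rho>) + \<epsilon>\<^sup>2 |Z|\<^sup>2, and |Z| is bounded.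
   As \<nabla>f is only locally Lipschitz, Z' need not be differentiable: the derivative of |Z'|\<^sup>2 is
   replaced by an upper right Dini derivative, which only needs Z' to be Lipschitz from the right. *)

section \<open>Upper right Dini derivatives\<close>

(* dini_upper_le \<phi> t L says that limsup (\<phi> (t + h) - \<phi> t) / h \<le> L as h \<rightarrow> 0+. *)
definition dini_upper_le :: "(real \<Rightarrow> real) \<Rightarrow> real \<Rightarrow> real \<Rightarrow> bool" where
  "dini_upper_le \<phi> t L \<longleftrightarrow>
     (\<exists>g. (g \<longlongrightarrow> L) (at_right 0) \<and> (\<forall>\<^sub>F h in at_right 0. \<phi> (t + h) - \<phi> t \<le> h * g h))"

lemma dini_upper_leI:
  assumes "(g \<longlongrightarrow> L) (at_right 0)" "\<forall>\<^sub>F h in at_right 0. \<phi> (t + h) - \<phi> t \<le> h * g h"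
  shows "dini_upper_le \<phi> t L"
  using assms unfolding dini_upper_le_def by blast

lemma right_difference_quotient_tendsto:
  fixes Z :: "real \<Rightarrow> 'c::real_normed_vector"
  assumes "(Z has_vector_derivative D) (at t within S)" "{t<..} \<subseteq> S"
  shows "((\<lambda>h. (1 / h) *\<^sub>R (Z (t + h) - Z t)) \<longlongrightarrow> D) (at_right 0)"
proof -
  have "(Z has_vector_derivative D) (at_right t)"
    using assms by (rule has_vector_derivative_within_subset)
  then have "((\<lambda>s. (1 / norm (s - t)) *\<^sub>R (Z s - (Z t + (s - t) *\<^sub>R D))) \<longlongrightarrow> 0) (at_right t)"
    unfolding has_vector_derivative_def has_derivative_within by simp
  then have "((\<lambda>h. (1 / norm h) *\<^sub>R (Z (t + h) - (Z t + h *\<^sub>R D)) + D) \<longlongrightarrow> 0 + D) (at_right 0)"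
    by (intro tendsto_add tendsto_const) (simp add: filterlim_at_right_to_0[of _ _ t] add.commute)
  moreover have "\<forall>\<^sub>F h in at_right 0. (1 / norm h) *\<^sub>R (Z (t + h) - (Z t + h *\<^sub>R D)) + D
      = (1 / h) *\<^sub>R (Z (t + h) - Z t)"
    using eventually_at_right_less[of 0]
    by eventually_elim (simp add: algebra_simps scaleR_diff_right)
  ultimately show ?thesis by (auto intro: Lim_transform_eventually)
qed

lemma right_difference_quotient_tendsto_real:
  fixes \<phi> :: "real \<Rightarrow> real"
  assumes "(\<phi> has_real_derivative D) (at t within S)" "{t<..} \<subseteq> S"
  shows "((\<lambda>h. (\<phi> (t + h) - \<phi> t) / h) \<longlongrightarrow> D) (at_right 0)"
  using right_difference_quotient_tendsto[of \<phi> D t S] assms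
  by (simp add: has_real_derivative_iff_has_vector_derivative divide_inverse mult.commute)

lemma has_real_derivative_right_tendsto:
  fixes \<phi> :: "real \<Rightarrow> real"
  assumes "(\<phi> has_real_derivative D) (at t within S)" "{t<..} \<subseteq> S"
  shows "((\<lambda>h. \<phi> (t + h)) \<longlongrightarrow> \<phi> t) (at_right 0)"
proof -
  have "(\<phi> \<longlongrightarrow> \<phi> t) (at_right t)"
    using DERIV_continuous[OF assms(1)] assms(2)
    by (auto simp: continuous_within intro: tendsto_within_subset)
  then show ?thesis
    by (simp add: filterlim_at_right_to_0[of _ _ t] add.commute)
qed

lemma has_real_derivative_imp_dini_upper_le:
  assumes "(\<phi> has_real_derivative D) (at t within S)" "{t<..} \<subseteq> S"
  shows "dini_upper_le \<phi> t D"
proof (rule dini_upper_leI)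
  show "((\<lambda>h. (\<phi> (t + h) - \<phi> t) / h) \<longlongrightarrow> D) (at_right 0)"
    using assms by (rule right_difference_quotient_tendsto_real)
  show "\<forall>\<^sub>F h in at_right 0. \<phi> (t + h) - \<phi> t \<le> h * ((\<phi> (t + h) - \<phi> t) / h)"
    using eventually_at_right_less[of 0] by eventually_elim simp
qed

lemma dini_upper_le_mono:
  assumes "dini_upper_le \<phi> t L" "L \<le> L'"
  shows "dini_upper_le \<phi> t L'"
proof -
  obtain g where g: "(g \<longlongrightarrow> L) (at_right 0)" "\<forall>\<^sub>F h in at_right 0. \<phi> (t + h) - \<phi> t \<le> h * g h"
    using assms(1) unfolding dini_upper_le_def by blast
  show ?thesis
  proof (rule dini_upper_leI)
    show "((\<lambda>h. g h + (L' - L)) \<longlongrightarrow> L') (at_right 0)"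
      using tendsto_add[OF g(1) tendsto_const[of "L' - L"]] by simp
    show "\<forall>\<^sub>F h in at_right 0. \<phi> (t + h) - \<phi> t \<le> h * (g h + (L' - L))"
      using g(2) eventually_at_right_less[of 0]
      by eventually_elim (use assms(2) in \<open>auto simp: distrib_left intro: add_increasing2\<close>)
  qed
qed

lemma dini_upper_le_add:
  assumes "dini_upper_le \<phi> t L" "dini_upper_le \<psi> t M"
  shows "dini_upper_le (\<lambda>s. \<phi> s + \<psi> s) t (L + M)"
proof -
  obtain g where g: "(g \<longlongrightarrow> L) (at_right 0)" "\<forall>\<^sub>F h in at_right 0. \<phi> (t + h) - \<phi> t \<le> h * g h"
    using assms(1) unfolding dini_upper_le_def by blast
  obtain k where k: "(k \<longlongrightarrow> M) (at_right 0)" "\<forall>\<^sub>F h in at_right 0. \<psi> (t + h) - \<psi> t \<le> h * k h"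
    using assms(2) unfolding dini_upper_le_def by blast
  show ?thesis
  proof (rule dini_upper_leI)
    show "((\<lambda>h. g h + k h) \<longlongrightarrow> L + M) (at_right 0)" using g(1) k(1) by (rule tendsto_add)
    show "\<forall>\<^sub>F h in at_right 0. \<phi> (t + h) + \<psi> (t + h) - (\<phi> t + \<psi> t) \<le> h * (g h + k h)"
      using g(2) k(2) by eventually_elim (simp add: distrib_left)
  qed
qed

lemma dini_upper_le_mult_left:
  assumes E: "(E has_real_derivative E') (at t within S)" "{t<..} \<subseteq> S"
    and E_nonneg: "\<And>s. s > t \<Longrightarrow> E s \<ge> 0"
    and P: "dini_upper_le P t L"
  shows "dini_upper_le (\<lambda>s. E s * P s) t (E t * L + E' * P t)"
proof -
  obtain g where g: "(g \<longlongrightarrow> L) (at_right 0)" "\<forall>\<^sub>F h in at_right 0. P (t + h) - P t \<le> h * g h"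
    using P unfolding dini_upper_le_def by blast
  show ?thesis
  proof (rule dini_upper_leI)
    show "((\<lambda>h. E (t + h) * g h + (E (t + h) - E t) / h * P t) \<longlongrightarrow> E t * L + E' * P t) (at_right 0)"
      by (intro tendsto_intros g(1) right_difference_quotient_tendsto_real[OF E]
          has_real_derivative_right_tendsto[OF E])
    show "\<forall>\<^sub>F h in at_right 0. E (t + h) * P (t + h) - E t * P t
        \<le> h * (E (t + h) * g h + (E (t + h) - E t) / h * P t)"
      using g(2) eventually_at_right_less[of 0]
    proof eventually_elim
      case (elim h)
      have "E (t + h) * (P (t + h) - P t) \<le> E (t + h) * (h * g h)"
        using elim E_nonneg[of "t + h"] by (intro mult_left_mono) auto
      moreover have "h * ((E (t + h) - E t) / h * P t) = (E (t + h) - E t) * P t"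
        using elim by simp
      ultimately show ?case by (simp add: algebra_simps)
    qed
  qed
qed

lemma dini_upper_le_imp_eventually_le:
  assumes "dini_upper_le \<phi> t L" "\<eta> > 0"
  shows "\<forall>\<^sub>F h in at_right 0. \<phi> (t + h) \<le> \<phi> t + (L + \<eta>) * h"
proof -
  obtain g where g: "(g \<longlongrightarrow> L) (at_right 0)" "\<forall>\<^sub>F h in at_right 0. \<phi> (t + h) - \<phi> t \<le> h * g h"
    using assms(1) unfolding dini_upper_le_def by blast
  have "\<forall>\<^sub>F h in at_right 0. g h < L + \<eta>"
    using order_tendstoD(2)[OF g(1)] assms(2) by simp
  with g(2) eventually_at_right_less[of 0] show ?thesis
  proof eventually_elim
    case (elim h)
    then have "h * g h \<le> h * (L + \<eta>)" by (intro mult_left_mono) auto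
    with elim show ?case by (simp add: algebra_simps)
  qed
qed

(* The last point c of [a, b] up to which \<phi> stays below the line of slope \<eta> through (a, \<phi> a)
   must be b, since otherwise the Dini bound at c pushes that point further right. *)
lemma dini_upper_le_nonpos_imp_le:
  assumes "a \<le> b" and cont: "continuous_on {a..b} \<phi>"
    and dini: "\<And>t. t \<in> {a..<b} \<Longrightarrow> dini_upper_le \<phi> t 0"
  shows "\<phi> b \<le> \<phi> a"
proof (rule field_le_epsilon)
  fix e :: real assume "e > 0"
  define \<eta> where "\<eta> = e / (b - a + 1)"
  have \<eta>: "\<eta> > 0" "\<eta> * (b - a + 1) = e"
    using \<open>e > 0\<close> \<open>a \<le> b\<close> by (simp_all add: \<eta>_def)
  define S where "S = {s \<in> {a..b}. \<phi> s \<le> \<phi> a + \<eta> * (s - a)}"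
  have "closed S"
  proof -
    have "continuous_on {a..b} (\<lambda>s. \<phi> s - \<eta> * (s - a))"
      by (intro continuous_intros cont)
    moreover have "S = {a..b} \<inter> (\<lambda>s. \<phi> s - \<eta> * (s - a)) -` {..\<phi> a}"
      unfolding S_def by auto
    ultimately show ?thesis
      using continuous_closed_preimage[OF _ closed_atLeastAtMost closed_atMost] by simp
  qed
  have "a \<in> S" using \<open>a \<le> b\<close> unfolding S_def by auto
  have "bdd_above S" unfolding S_def by (auto intro: bdd_aboveI[of _ b])
  define c where "c = Sup S"
  have "c \<in> S"
    unfolding c_def using closed_contains_Sup \<open>closed S\<close> \<open>bdd_above S\<close> \<open>a \<in> S\<close> by blast
  have "c = b"
  proof (rule ccontr)
    assume "c \<noteq> b"
    with \<open>c \<in> S\<close> have c: "c \<in> {a..<b}" unfolding S_def by auto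
    have "\<forall>\<^sub>F h in at_right 0. h < b - c"
      unfolding eventually_at_right_field using c by (intro exI[of _ "b - c"]) auto
    then have "\<forall>\<^sub>F h in at_right 0. \<phi> (c + h) \<le> \<phi> c + \<eta> * h \<and> h < b - c \<and> h > 0"
      using dini_upper_le_imp_eventually_le[OF dini[OF c] \<open>\<eta> > 0\<close>] eventually_at_right_less[of 0]
      by eventually_elim simp
    then obtain h where h: "\<phi> (c + h) \<le> \<phi> c + \<eta> * h" "h < b - c" "h > 0"
      using eventually_happens by force
    have "c + h \<in> S" using h \<open>c \<in> S\<close> c unfolding S_def by (auto simp: algebra_simps)
    then have "c + h \<le> c" unfolding c_def using \<open>bdd_above S\<close> by (rule cSup_upper)
    with h show False by simp
  qed
  with \<open>c \<in> S\<close> \<eta> show "\<phi> b \<le> \<phi> a + e" unfolding S_def by (auto simp: algebra_simps)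
qed

lemma dini_upper_le_max_const:
  assumes V_tendsto: "(V \<longlongrightarrow> V t) (at_right t)" and V_dini: "M \<le> V t \<Longrightarrow> dini_upper_le V t 0"
  shows "dini_upper_le (\<lambda>s. max (V s) M) t 0"
proof (cases "V t < M")
  case True
  have "\<forall>\<^sub>F s in at_right t. V s < M"
    using V_tendsto True by (rule order_tendstoD)
  then have "\<forall>\<^sub>F h in at_right 0. V (t + h) < M"
    by (simp add: eventually_at_right_to_0[of _ t] add.commute)
  then have "\<forall>\<^sub>F h in at_right 0. max (V (t + h)) M - max (V t) M \<le> h * 0"
    by eventually_elim (use True in simp)
  then show ?thesis by (intro dini_upper_leI[of "\<lambda>_. 0"]) auto
next
  case False
  then obtain g where g: "(g \<longlongrightarrow> 0) (at_right 0)"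
    "\<forall>\<^sub>F h in at_right 0. V (t + h) - V t \<le> h * g h"
    using V_dini unfolding dini_upper_le_def by auto
  show ?thesis
  proof (rule dini_upper_leI)
    show "((\<lambda>h. max (g h) 0) \<longlongrightarrow> 0) (at_right 0)"
      using tendsto_max[OF g(1) tendsto_const[of 0]] by simp
    show "\<forall>\<^sub>F h in at_right 0. max (V (t + h)) M - max (V t) M \<le> h * max (g h) 0"
      using g(2) eventually_at_right_less[of 0]
    proof eventually_elim
      case (elim h)
      then have "V (t + h) - V t \<le> h * max (g h) 0" "0 \<le> h * max (g h) 0"
        by (auto intro: order_trans mult_left_mono)
      with False show ?case by auto
    qed
  qed
qed

lemma le_max_if_deriv_nonpos_above:
  fixes V V' :: "real \<Rightarrow> real"
  assumes V_deriv: "\<And>t. t \<ge> t0 \<Longrightarrow> (V has_real_derivative V' t) (at t within {t0..})"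
    and nonpos: "\<And>t. t \<ge> t0 \<Longrightarrow> V t \<ge> M \<Longrightarrow> V' t \<le> 0"
    and "b \<ge> t0"
  shows "V b \<le> max (V t0) M"
proof -
  have V_cont: "continuous_on {t0..} V"
    using V_deriv by (auto simp: continuous_on_eq_continuous_within intro: DERIV_continuous)
  have "max (V b) M \<le> max (V t0) M"
  proof (rule dini_upper_le_nonpos_imp_le[OF \<open>b \<ge> t0\<close>])
    show "continuous_on {t0..b} (\<lambda>s. max (V s) M)"
      by (intro continuous_intros continuous_on_subset[OF V_cont]) auto
  next
    fix t assume t: "t \<in> {t0..<b}"
    then have sub: "{t<..} \<subseteq> {t0..}" by auto
    show "dini_upper_le (\<lambda>s. max (V s) M) t 0"
    proof (rule dini_upper_le_max_const)
      show "(V \<longlongrightarrow> V t) (at_right t)"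
        using V_cont t sub by (auto simp: continuous_on_def intro: tendsto_within_subset)
      show "dini_upper_le V t 0" if "M \<le> V t"
        using has_real_derivative_imp_dini_upper_le[OF V_deriv sub] nonpos that t
        by (auto intro: dini_upper_le_mono)
    qed
  qed
  then show ?thesis by simp
qed

lemma right_increment_bound:
  fixes Z :: "real \<Rightarrow> 'c::real_normed_vector"
  assumes "(Z has_vector_derivative D) (at t within S)" "{t<..} \<subseteq> S"
  shows "\<forall>\<^sub>F h in at_right 0. norm (Z (t + h) - Z t) \<le> (norm D + 1) * h"
proof -
  have "((\<lambda>h. norm ((1 / h) *\<^sub>R (Z (t + h) - Z t))) \<longlongrightarrow> norm D) (at_right 0)"
    using right_difference_quotient_tendsto[OF assms] by (rule tendsto_norm)
  then have "\<forall>\<^sub>F h in at_right 0. norm ((1 / h) *\<^sub>R (Z (t + h) - Z t)) < norm D + 1"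
    by (rule order_tendstoD) simp
  with eventually_at_right_less[of 0] show ?thesis
    by eventually_elim (simp add: divide_simps mult.commute)
qed

lemma lipschitz_on_right_increment_bound:
  assumes lipschitz: "K-lipschitz_on (cball (Z t) 1) F"
    and Z: "\<forall>\<^sub>F h in at_right 0. norm (Z (t + h) - Z t) \<le> C * h"
  shows "\<forall>\<^sub>F h in at_right 0. norm (F (Z (t + h)) - F (Z t)) \<le> K * C * h"
proof -
  have "\<forall>\<^sub>F h in at_right 0. h < 1 / (\<bar>C\<bar> + 1)"
    unfolding eventually_at_right_field by (intro exI[of _ "1 / (\<bar>C\<bar> + 1)"]) auto
  with Z eventually_at_right_less[of 0] show ?thesis
  proof eventually_elim
    case (elim h)
    have "C * h \<le> (\<bar>C\<bar> + 1) * h"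
      using elim(2) by (intro mult_right_mono) auto
    also have "\<dots> < 1"
      using elim(3) by (simp add: field_simps)
    finally have "C * h \<le> 1"
      by simp
    with elim(1) have "Z (t + h) \<in> cball (Z t) 1"
      by (simp add: dist_norm norm_minus_commute)
    then have "norm (F (Z (t + h)) - F (Z t)) \<le> K * norm (Z (t + h) - Z t)"
      using lipschitz_onD[OF lipschitz, of "Z (t + h)" "Z t"] by (simp add: dist_norm)
    also have "\<dots> \<le> K * (C * h)"
      using elim(1) lipschitz_on_nonneg[OF lipschitz] by (rule mult_left_mono)
    finally show ?case
      by (simp add: mult.assoc)
  qed
qed

lemma has_real_derivative_norm_diff_sq:
  fixes Z :: "real \<Rightarrow> 'c::real_inner"
  assumes "(Z has_vector_derivative D) (at t within S)"
  shows "((\<lambda>s. (norm (Z s - c))\<^sup>2) has_real_derivative 2 * inner D (Z t - c)) (at t within S)"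
proof -
  have d: "((\<lambda>s. Z s - c) has_derivative (\<lambda>h. h *\<^sub>R D)) (at t within S)"
    using assms unfolding has_vector_derivative_def by (intro derivative_eq_intros) auto
  have "((\<lambda>s. inner (Z s - c) (Z s - c)) has_derivative
      (\<lambda>h. inner (Z t - c) (h *\<^sub>R D) + inner (h *\<^sub>R D) (Z t - c))) (at t within S)"
    using d d by (rule has_derivative_inner)
  then show ?thesis
    unfolding has_field_derivative_def power2_norm_eq_inner
    by (rule has_derivative_eq_rhs) (auto simp: fun_eq_iff inner_commute)
qed

lemma has_real_derivative_integral_from:
  fixes \<epsilon> :: "real \<Rightarrow> real"
  assumes "continuous_on {t0..} \<epsilon>" "t \<ge> t0"
  shows "((\<lambda>s. integral {t0..s} \<epsilon>) has_real_derivative \<epsilon> t) (at t within {t0..})"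
proof -
  have "((\<lambda>s. integral {t0..s} \<epsilon>) has_real_derivative \<epsilon> t) (at t within {t0..t + 1})"
    using assms by (intro integral_has_real_derivative) (auto intro: continuous_on_subset)
  moreover have "at t within {t0..t + 1} = at t within {t0..}"
    by (rule at_within_nhd[where S = "{..<t + 1}"]) (use assms in auto)
  ultimately show ?thesis by simp
qed

lemma quadratic_remainder_tendsto_zero:
  fixes D r :: "real \<Rightarrow> 'c::real_inner"
  assumes D: "\<forall>\<^sub>F h in at_right 0. norm (D h) \<le> K * h" and r: "(r \<longlongrightarrow> 0) (at_right 0)"
  shows "((\<lambda>h. (2 * inner (D h) (r h) + (norm (D h))\<^sup>2) / h) \<longlongrightarrow> 0) (at_right 0)"
proof (rule Lim_null_comparison)
  show "\<forall>\<^sub>F h in at_right 0.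
      norm ((2 * inner (D h) (r h) + (norm (D h))\<^sup>2) / h) \<le> 2 * K * norm (r h) + K\<^sup>2 * h"
    using D eventually_at_right_less[of 0]
  proof eventually_elim
    case (elim h)
    have "\<bar>inner (D h) (r h)\<bar> \<le> K * h * norm (r h)"
      using Cauchy_Schwarz_ineq2[of "D h" "r h"] elim(1)
      by (meson mult_right_mono norm_ge_zero order_trans)
    moreover have "(norm (D h))\<^sup>2 \<le> (K * h)\<^sup>2"
      using elim(1) by (intro power_mono) auto
    moreover have "h * (2 * K * norm (r h) + K\<^sup>2 * h) = 2 * (K * h * norm (r h)) + (K * h)\<^sup>2"
      by (simp add: power2_eq_square algebra_simps)
    ultimately have "\<bar>2 * inner (D h) (r h) + (norm (D h))\<^sup>2\<bar> \<le> h * (2 * K * norm (r h) + K\<^sup>2 * h)"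
      by (smt (verit) zero_le_power2)
    then show ?case
      using elim(2) by (simp add: divide_le_eq mult.commute)
  qed
  have "((\<lambda>h. 2 * K * norm (r h) + K\<^sup>2 * h) \<longlongrightarrow> 2 * K * norm (0::'c) + K\<^sup>2 * 0) (at_right 0)"
    by (intro tendsto_intros r)
  then show "((\<lambda>h. 2 * K * norm (r h) + K\<^sup>2 * h) \<longlongrightarrow> 0) (at_right 0)"
    by simp
qed

section \<open>Monotone operators and the Lagrangian\<close>

definition monotone_operator :: "('c::real_inner \<Rightarrow> 'c) \<Rightarrow> bool" where
  "monotone_operator F \<longleftrightarrow> (\<forall>u v. 0 \<le> inner (F u - F v) (u - v))"

lemma monotone_operator_regularized_increment:
  assumes "monotone_operator F"
  shows "inner ((- F a - e1 *\<^sub>R a) - (- F c - e0 *\<^sub>R c)) (a - c)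
    \<le> - e1 * (norm (a - c))\<^sup>2 - (e1 - e0) * inner c (a - c)"
proof -
  have "(- F a - e1 *\<^sub>R a) - (- F c - e0 *\<^sub>R c) = - (F a - F c) - e1 *\<^sub>R (a - c) - (e1 - e0) *\<^sub>R c"
    by (simp add: algebra_simps)
  then have "inner ((- F a - e1 *\<^sub>R a) - (- F c - e0 *\<^sub>R c)) (a - c)
      = - inner (F a - F c) (a - c) - e1 * inner (a - c) (a - c) - (e1 - e0) * inner c (a - c)"
    by (simp only: inner_diff_left inner_minus_left inner_scaleR_left)
  moreover have "0 \<le> inner (F a - F c) (a - c)"
    using assms unfolding monotone_operator_def by blast
  ultimately show ?thesis
    by (simp add: power2_norm_eq_inner)
qed

lemma regularized_increment_norm_le:
  fixes F :: "'c::real_normed_vector \<Rightarrow> 'c"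
  shows "norm ((- F a - e1 *\<^sub>R a) - (- F c - e0 *\<^sub>R c))
    \<le> norm (F a - F c) + \<bar>e1\<bar> * norm (a - c) + \<bar>e1 - e0\<bar> * norm c"
proof -
  have "(- F a - e1 *\<^sub>R a) - (- F c - e0 *\<^sub>R c) = - (F a - F c) - e1 *\<^sub>R (a - c) - (e1 - e0) *\<^sub>R c"
    by (simp add: algebra_simps)
  then show ?thesis
    using norm_triangle_ineq4[of "- (F a - F c)" "e1 *\<^sub>R (a - c)"]
      norm_triangle_ineq4[of "- (F a - F c) - e1 *\<^sub>R (a - c)" "(e1 - e0) *\<^sub>R c"]
    by (simp only:) (simp add: norm_minus_commute[of "F c" "F a"])
qed

lemma monotone_operator_velocity_sq_increment:
  fixes F :: "'c::real_inner \<Rightarrow> 'c"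
  assumes "monotone_operator F" "h > 0"
    and u1: "u1 = - F a - e1 *\<^sub>R a" and u0: "u0 = - F c - e0 *\<^sub>R c"
  defines "q \<equiv> (1 / h) *\<^sub>R (a - c)"
  shows "(norm u1)\<^sup>2 - (norm u0)\<^sup>2
    \<le> h * (2 * (- e1 * (norm q)\<^sup>2 - (e1 - e0) / h * inner c q))
      + (2 * inner (u1 - u0) (u0 - q) + (norm (u1 - u0))\<^sup>2)"
proof -
  have "a - c = h *\<^sub>R q"
    using \<open>h > 0\<close> by (simp add: q_def)
  then have "inner (u1 - u0) (h *\<^sub>R q) \<le> - e1 * (norm (h *\<^sub>R q))\<^sup>2 - (e1 - e0) * inner c (h *\<^sub>R q)"
    using monotone_operator_regularized_increment[OF assms(1), of a e1 c e0] by (simp add: u1 u0)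
  then have "h * inner (u1 - u0) q \<le> h * (h * (- e1 * (norm q)\<^sup>2) - (e1 - e0) * inner c q)"
    by (simp add: power2_eq_square algebra_simps)
  then have "inner (u1 - u0) q \<le> h * (- e1 * (norm q)\<^sup>2) - (e1 - e0) * inner c q"
    using \<open>h > 0\<close> by simp
  also have "\<dots> = h * (- e1 * (norm q)\<^sup>2 - (e1 - e0) / h * inner c q)"
    using \<open>h > 0\<close> by (simp add: field_simps)
  finally have "inner (u1 - u0) q \<le> h * (- e1 * (norm q)\<^sup>2 - (e1 - e0) / h * inner c q)" .
  moreover have "(norm u1)\<^sup>2 - (norm u0)\<^sup>2
      = 2 * inner (u1 - u0) q + (2 * inner (u1 - u0) (u0 - q) + (norm (u1 - u0))\<^sup>2)"
    by (simp add: power2_norm_eq_inner inner_diff_left inner_diff_right inner_commute)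
  ultimately show ?thesis
    by (simp only: mult.left_commute[of h 2])
qed

lemma convex_on_gradient_inequality:
  fixes f :: "'a::real_inner \<Rightarrow> real"
  assumes convex: "convex_on UNIV f" and grad: "(f has_derivative (\<lambda>h. inner g h)) (at x)"
  shows "f x + inner g (y - x) \<le> f y"
proof -
  define \<gamma> where "\<gamma> r = f (x + r *\<^sub>R (y - x))" for r
  have "((\<lambda>r. x + r *\<^sub>R (y - x)) has_derivative (\<lambda>r. r *\<^sub>R (y - x))) (at 0)"
    by (intro derivative_eq_intros) auto
  then have "(\<gamma> has_derivative (\<lambda>r. inner g (r *\<^sub>R (y - x)))) (at 0)"
    unfolding \<gamma>_def using has_derivative_compose grad by fastforce
  then have "(\<gamma> has_real_derivative inner g (y - x)) (at 0)"
    unfolding has_field_derivative_def by (rule has_derivative_eq_rhs) (auto simp: fun_eq_iff)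
  moreover have "convex_on UNIV \<gamma>"
  proof (rule convex_onI)
    fix u r s :: real assume "0 < u" "u < 1"
    have "x + ((1 - u) *\<^sub>R r + u *\<^sub>R s) *\<^sub>R (y - x)
        = (1 - u) *\<^sub>R (x + r *\<^sub>R (y - x)) + u *\<^sub>R (x + s *\<^sub>R (y - x))"
      by (simp add: algebra_simps)
    then show "\<gamma> ((1 - u) *\<^sub>R r + u *\<^sub>R s) \<le> (1 - u) * \<gamma> r + u * \<gamma> s"
      unfolding \<gamma>_def using convex_onD[OF convex, of u] \<open>0 < u\<close> \<open>u < 1\<close> by simp
  qed simp
  ultimately have "inner g (y - x) * (1 - 0) \<le> \<gamma> 1 - \<gamma> 0"
    by (intro convex_on_imp_above_tangent[where A = UNIV]) auto
  then show ?thesis unfolding \<gamma>_def by simp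
qed

lemma monotone_operator_gradient:
  fixes f :: "'a::real_inner \<Rightarrow> real"
  assumes "convex_on UNIV f" "\<And>u. (f has_derivative (\<lambda>h. inner (gradf u) h)) (at u)"
  shows "monotone_operator gradf"
  unfolding monotone_operator_def
proof (intro allI)
  fix u v
  have "f u + inner (gradf u) (v - u) \<le> f v" "f v + inner (gradf v) (u - v) \<le> f u"
    using assms by (auto intro: convex_on_gradient_inequality)
  then show "0 \<le> inner (gradf u - gradf v) (u - v)"
    by (simp add: inner_diff_left inner_diff_right)
qed

lemma bounded_linear_adjoint:
  fixes A :: "'a::real_inner \<Rightarrow> 'b::real_inner"
  assumes A: "bounded_linear A" and adjoint: "\<And>u v. inner (A u) v = inner u (A' v)"
  shows "bounded_linear A'"
proof
  fix v w :: 'b and r :: real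
  show "A' (v + w) = A' v + A' w"
    by (metis adjoint inner_add_right vector_eq_ldot)
  show "A' (r *\<^sub>R v) = r *\<^sub>R A' v"
    by (metis adjoint inner_scaleR_right vector_eq_ldot)
next
  obtain K where K: "\<And>u. norm (A u) \<le> norm u * K" "K > 0"
    using bounded_linear.pos_bounded[OF A] by blast
  have "norm (A' v) \<le> norm v * K" for v
  proof -
    have "(norm (A' v))\<^sup>2 = inner (A (A' v)) v"
      by (simp add: adjoint power2_norm_eq_inner)
    also have "\<dots> \<le> norm (A' v) * K * norm v"
      using norm_cauchy_schwarz[of "A (A' v)" v] K(1)[of "A' v"]
      by (meson mult_right_mono norm_ge_zero order_trans)
    finally show ?thesis
      using K(2) by (cases "A' v = 0") (auto simp: power2_eq_square mult.commute mult.left_commute)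
  qed
  then show "\<exists>K. \<forall>v. norm (A' v) \<le> norm v * K" by blast
qed

(* The operator (\<nabla>\<^sub>x L, - \<nabla>\<^sub>\<lambda> L) of the Lagrangian. *)
definition lagrangian_operator ::
  "('a \<Rightarrow> 'a::real_inner) \<Rightarrow> ('a \<Rightarrow> 'b::real_inner) \<Rightarrow> ('b \<Rightarrow> 'a) \<Rightarrow> 'b \<Rightarrow> 'a \<times> 'b \<Rightarrow> 'a \<times> 'b" where
  "lagrangian_operator gradf A Astar b = (\<lambda>(x, l). (gradf x + Astar l, b - A x))"

lemma monotone_operator_lagrangian_operator:
  assumes "monotone_operator gradf" "\<And>u v. inner (A u) v = inner u (Astar v)"
  shows "monotone_operator (lagrangian_operator gradf A Astar b)"
  unfolding monotone_operator_def
proof (intro allI)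
  fix p q :: "'a \<times> 'b"
  obtain u1 v1 u2 v2 where pq: "p = (u1, v1)" "q = (u2, v2)" by fastforce
  let ?F = "lagrangian_operator gradf A Astar b"
  have "inner (Astar v) u = inner (A u) v" for u v
    by (metis assms(2) inner_commute)
  then have "inner (Astar v1 - Astar v2) (u1 - u2) = inner (A u1 - A u2) (v1 - v2)"
    by (simp add: inner_diff_left inner_diff_right)
  then have "inner (?F p - ?F q) (p - q) = inner (gradf u1 - gradf u2) (u1 - u2)"
    unfolding pq lagrangian_operator_def
    by (simp add: inner_diff_left inner_diff_right inner_add_left)
  then show "0 \<le> inner (?F p - ?F q) (p - q)"
    using assms(1) unfolding monotone_operator_def by simp
qed

lemma lagrangian_operator_lipschitz_on_bounded:
  assumes gradf: "\<And>B. bounded B \<Longrightarrow> \<exists>K. K-lipschitz_on B gradf"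
    and "bounded_linear A" "bounded_linear Astar" "bounded B"
  shows "\<exists>K. K-lipschitz_on B (lagrangian_operator gradf A Astar b)"
proof -
  obtain K1 where K1: "K1-lipschitz_on B fst"
    using bounded_linear.lipschitz_boundE[OF bounded_linear_fst] by blast
  obtain K2 where K2: "K2-lipschitz_on (fst ` B) gradf"
    using gradf bounded_fst[OF \<open>bounded B\<close>] by blast
  obtain K3 where K3: "K3-lipschitz_on B (\<lambda>p. Astar (snd p))"
    using bounded_linear_compose[OF \<open>bounded_linear Astar\<close> bounded_linear_snd]
    by (blast elim: bounded_linear.lipschitz_boundE)
  obtain K4 where K4: "K4-lipschitz_on B (\<lambda>p. A (fst p))"
    using bounded_linear_compose[OF \<open>bounded_linear A\<close> bounded_linear_fst]
    by (blast elim: bounded_linear.lipschitz_boundE)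
  have "\<exists>K. K-lipschitz_on B (\<lambda>p. (gradf (fst p) + Astar (snd p), b - A (fst p)))"
    using lipschitz_on_Pair[OF lipschitz_on_add[OF lipschitz_on_compose2[OF K1 K2] K3]
        lipschitz_on_diff[OF lipschitz_on_constant K4]]
    by blast
  then show ?thesis
    by (simp add: lagrangian_operator_def case_prod_beta)
qed

lemma lagrangian_operator_saddle_point:
  fixes f :: "'a::real_inner \<Rightarrow> real" and A :: "'a \<Rightarrow> 'b::real_inner"
  assumes grad: "\<And>u. (f has_derivative (\<lambda>h. inner (gradf u) h)) (at u)"
    and A: "bounded_linear A" and adjoint: "\<And>u v. inner (A u) v = inner u (Astar v)"
    and saddle: "(xs, ls) \<in> saddle_points f A b"
  shows "lagrangian_operator gradf A Astar b (xs, ls) = 0"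
proof -
  have max_l: "\<And>l. lagrangian f A b xs l \<le> lagrangian f A b xs ls"
   and min_x: "\<And>x. lagrangian f A b xs ls \<le> lagrangian f A b x ls"
    using saddle unfolding saddle_points_def by auto
  have "inner (ls + (A xs - b)) (A xs - b) \<le> inner ls (A xs - b)"
    using max_l[of "ls + (A xs - b)"] unfolding lagrangian_def by simp
  then have "inner (A xs - b) (A xs - b) \<le> 0"
    by (simp add: inner_add_left)
  then have feasible: "A xs = b"
    by (smt (verit) inner_gt_zero_iff eq_iff_diff_eq_0)
  have "((\<lambda>x. lagrangian f A b x ls) has_derivative (\<lambda>h. inner (gradf xs) h + inner ls (A h)))
      (at xs)"
    unfolding lagrangian_def
    by (rule derivative_eq_intros grad bounded_linear_imp_has_derivative[OF A] | simp)+
  then have "(\<lambda>h. inner (gradf xs) h + inner ls (A h)) = (\<lambda>h. 0)"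
    by (rule has_derivative_local_min) (use min_x in simp)
  then have "inner h (gradf xs + Astar ls) = 0" for h
    by (metis adjoint inner_add_right inner_commute)
  then have "gradf xs + Astar ls = 0"
    by (metis inner_eq_zero_iff)
  with feasible show ?thesis
    by (simp add: lagrangian_operator_def zero_prod_def)
qed

section \<open>Tikhonov regularized monotone flows\<close>

locale regularized_monotone_flow =
  fixes F :: "'c::real_inner \<Rightarrow> 'c" and eps eps' :: "real \<Rightarrow> real" and t0 :: real
    and Z Z' :: "real \<Rightarrow> 'c"
  assumes monotone: "monotone_operator F"
    and lipschitz_on_bounded: "\<And>B. bounded B \<Longrightarrow> \<exists>K. K-lipschitz_on B F"
    and eps_pos: "\<And>t. t \<ge> t0 \<Longrightarrow> eps t > 0"
    and eps_deriv: "\<And>t. t \<ge> t0 \<Longrightarrow> (eps has_real_derivative eps' t) (at t within {t0..})"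
    and Z_deriv: "\<And>t. t \<ge> t0 \<Longrightarrow> (Z has_vector_derivative Z' t) (at t within {t0..})"
    and Z'_cont: "continuous_on {t0..} Z'"
    and flow: "\<And>t. t \<ge> t0 \<Longrightarrow> Z' t = - F (Z t) - eps t *\<^sub>R Z t"
begin

lemma inner_velocity_nonpos_outside_ball:
  assumes "F zs = 0" "t \<ge> t0" "norm zs \<le> norm (Z t - zs)"
  shows "inner (Z' t) (Z t - zs) \<le> 0"
proof -
  define w where "w = Z t - zs"
  have "norm zs * norm w \<le> inner w w"
    using mult_right_mono[OF assms(3) norm_ge_zero]
    by (simp add: w_def power2_norm_eq_inner[symmetric] power2_eq_square)
  moreover have "- inner zs w \<le> norm zs * norm w"
    using norm_cauchy_schwarz[of "- zs" w] by simp
  moreover have "inner (Z t) w = inner w w + inner zs w"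
    by (simp add: w_def inner_diff_left)
  ultimately have "0 \<le> eps t * inner (Z t) w"
    using eps_pos[OF assms(2)] by simp
  moreover have "0 \<le> inner (F (Z t) - F zs) w"
    using monotone unfolding monotone_operator_def w_def by blast
  moreover have "inner (Z' t) w = - inner (F (Z t) - F zs) w - eps t * inner (Z t) w"
    using flow[OF assms(2)] assms(1) by (simp add: inner_diff_left)
  ultimately show ?thesis
    unfolding w_def by linarith
qed

lemma trajectory_bounded:
  assumes "F zs = 0"
  obtains B where "\<And>t. t \<ge> t0 \<Longrightarrow> norm (Z t) \<le> B"
proof -
  define V where "V t = (norm (Z t - zs))\<^sup>2" for t
  have V_deriv: "(V has_real_derivative 2 * inner (Z' t) (Z t - zs)) (at t within {t0..})"
    if "t \<ge> t0" for t
    unfolding V_def using Z_deriv[OF that] by (rule has_real_derivative_norm_diff_sq)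
  have nonpos: "2 * inner (Z' t) (Z t - zs) \<le> 0" if "t \<ge> t0" "V t \<ge> (norm zs)\<^sup>2" for t
  proof -
    have "norm zs \<le> norm (Z t - zs)"
      using that(2) norm_ge_zero unfolding V_def by (rule power2_le_imp_le)
    then show ?thesis
      using inner_velocity_nonpos_outside_ball[OF assms \<open>t \<ge> t0\<close>] by simp
  qed
  define R where "R = max (V t0) ((norm zs)\<^sup>2)"
  have "norm (Z t) \<le> sqrt R + norm zs" if "t \<ge> t0" for t
  proof -
    have "V t \<le> R"
      unfolding R_def using le_max_if_deriv_nonpos_above[OF V_deriv nonpos that] .
    then have "norm (Z t - zs) \<le> sqrt R"
      unfolding V_def by (simp add: real_le_rsqrt)
    then show ?thesis
      using norm_triangle_sub[of "Z t" zs] by linarith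
  qed
  then show ?thesis using that by blast
qed

lemma velocity_right_lipschitz:
  assumes "t \<ge> t0"
  obtains K where "\<forall>\<^sub>F h in at_right 0. norm (Z' (t + h) - Z' t) \<le> K * h"
proof -
  have sub: "{t<..} \<subseteq> {t0..}" using assms by auto
  obtain KF where KF: "KF-lipschitz_on (cball (Z t) 1) F"
    using lipschitz_on_bounded[OF bounded_cball] by blast
  define KZ where "KZ = norm (Z' t) + 1"
  define Ke where "Ke = norm (eps' t) + 1"
  have Z_inc: "\<forall>\<^sub>F h in at_right 0. norm (Z (t + h) - Z t) \<le> KZ * h"
    unfolding KZ_def using Z_deriv[OF assms] sub by (rule right_increment_bound)
  then have "\<forall>\<^sub>F h in at_right 0. norm (F (Z (t + h)) - F (Z t)) \<le> KF * KZ * h"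
    using KF by (intro lipschitz_on_right_increment_bound)
  moreover have "\<forall>\<^sub>F h in at_right 0. norm (eps (t + h) - eps t) \<le> Ke * h"
    unfolding Ke_def using eps_deriv[OF assms] sub
    by (intro right_increment_bound) (simp_all add: has_real_derivative_iff_has_vector_derivative)
  moreover have "\<forall>\<^sub>F h in at_right 0. h < (1::real)"
    unfolding eventually_at_right_field by (intro exI[of _ 1]) auto
  ultimately have "\<forall>\<^sub>F h in at_right 0. norm (Z' (t + h) - Z' t)
      \<le> (KF * KZ + (\<bar>eps t\<bar> + Ke) * KZ + Ke * norm (Z t)) * h"
    using Z_inc eventually_at_right_less[of 0]
  proof eventually_elim
    case (elim h)
    have "\<bar>eps (t + h)\<bar> * norm (Z (t + h) - Z t) \<le> (\<bar>eps t\<bar> + Ke) * (KZ * h)"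
    proof (rule mult_mono)
      have "Ke * h \<le> Ke"
        using elim(3) by (intro mult_left_le) (auto simp: Ke_def)
      with elim(2) show "\<bar>eps (t + h)\<bar> \<le> \<bar>eps t\<bar> + Ke"
        by simp
    qed (use elim(4) in \<open>simp_all add: Ke_def\<close>)
    moreover have "\<bar>eps (t + h) - eps t\<bar> * norm (Z t) \<le> Ke * h * norm (Z t)"
      using elim(2) by (simp add: mult_right_mono)
    moreover have "norm (Z' (t + h) - Z' t) \<le> norm (F (Z (t + h)) - F (Z t))
        + \<bar>eps (t + h)\<bar> * norm (Z (t + h) - Z t) + \<bar>eps (t + h) - eps t\<bar> * norm (Z t)"
      using regularized_increment_norm_le[of F "Z (t + h)" "eps (t + h)" "Z t" "eps t"]
        assms elim(5)
      by (simp add: flow)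
    ultimately show ?case
      using elim(1) by (simp add: algebra_simps)
  qed
  then show ?thesis using that by blast
qed

lemma dini_upper_le_velocity_sq:
  assumes "t \<ge> t0"
  shows "dini_upper_le (\<lambda>s. (norm (Z' s))\<^sup>2) t
    (- 2 * eps t * (norm (Z' t))\<^sup>2 - 2 * eps' t * inner (Z t) (Z' t))"
proof -
  have sub: "{t<..} \<subseteq> {t0..}" using assms by auto
  obtain K where K: "\<forall>\<^sub>F h in at_right 0. norm (Z' (t + h) - Z' t) \<le> K * h"
    using velocity_right_lipschitz[OF assms] by blast
  define q where "q h = (1 / h) *\<^sub>R (Z (t + h) - Z t)" for h
  define de where "de h = (eps (t + h) - eps t) / h" for h
  define D where "D h = Z' (t + h) - Z' t" for h
  define R where "R h = (2 * inner (D h) (Z' t - q h) + (norm (D h))\<^sup>2) / h" for h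
  have q: "(q \<longlongrightarrow> Z' t) (at_right 0)"
    unfolding q_def using Z_deriv[OF assms] sub by (rule right_difference_quotient_tendsto)
  have de: "(de \<longlongrightarrow> eps' t) (at_right 0)"
    unfolding de_def using eps_deriv[OF assms] sub by (rule right_difference_quotient_tendsto_real)
  have eps: "((\<lambda>h. eps (t + h)) \<longlongrightarrow> eps t) (at_right 0)"
    using eps_deriv[OF assms] sub by (rule has_real_derivative_right_tendsto)
  have "((\<lambda>h. Z' t - q h) \<longlongrightarrow> 0) (at_right 0)"
    using tendsto_diff[OF tendsto_const[of "Z' t"] q] by simp
  then have R: "(R \<longlongrightarrow> 0) (at_right 0)"
    unfolding R_def D_def using K by (intro quadratic_remainder_tendsto_zero)
  show ?thesis
  proof (rule dini_upper_leI)
    have "((\<lambda>h. 2 * (- eps (t + h) * (norm (q h))\<^sup>2 - de h * inner (Z t) (q h)) + R h)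
        \<longlongrightarrow> 2 * (- eps t * (norm (Z' t))\<^sup>2 - eps' t * inner (Z t) (Z' t)) + 0) (at_right 0)"
      by (intro tendsto_intros eps q de R)
    then show "((\<lambda>h. 2 * (- eps (t + h) * (norm (q h))\<^sup>2 - de h * inner (Z t) (q h)) + R h)
        \<longlongrightarrow> - 2 * eps t * (norm (Z' t))\<^sup>2 - 2 * eps' t * inner (Z t) (Z' t)) (at_right 0)"
      by (simp add: algebra_simps)
  next
    show "\<forall>\<^sub>F h in at_right 0. (norm (Z' (t + h)))\<^sup>2 - (norm (Z' t))\<^sup>2
        \<le> h * (2 * (- eps (t + h) * (norm (q h))\<^sup>2 - de h * inner (Z t) (q h)) + R h)"
      using eventually_at_right_less[of 0]
    proof eventually_elim
      case (elim h)
      have "(norm (Z' (t + h)))\<^sup>2 - (norm (Z' t))\<^sup>2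
          \<le> h * (2 * (- eps (t + h) * (norm (q h))\<^sup>2 - de h * inner (Z t) (q h)))
            + (2 * inner (D h) (Z' t - q h) + (norm (D h))\<^sup>2)"
        using monotone_operator_velocity_sq_increment[OF monotone elim flow flow] assms elim
        by (simp add: q_def de_def D_def)
      moreover have "h * R h = 2 * inner (D h) (Z' t - q h) + (norm (D h))\<^sup>2"
        using elim by (simp add: R_def)
      ultimately show ?case
        by (simp add: distrib_left)
    qed
  qed
qed

lemma eps_continuous: "continuous_on {t0..} eps"
  using eps_deriv by (auto simp: continuous_on_eq_continuous_within intro: DERIV_continuous)

definition energy :: "real \<Rightarrow> real" where
  "energy s = exp (2 * integral {t0..s} eps) * ((norm (Z' s))\<^sup>2 + eps' s * (norm (Z s))\<^sup>2)"

lemma dini_upper_le_energy: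
  fixes D :: real
  assumes "t \<ge> t0" and eps'_deriv: "(eps' has_real_derivative D) (at t within {t0..})"
  shows "dini_upper_le energy t
    (exp (2 * integral {t0..t} eps) * (2 * eps t * eps' t + D) * (norm (Z t))\<^sup>2)"
proof -
  define E where "E s = exp (2 * integral {t0..s} eps)" for s
  define N where "N s = (norm (Z s))\<^sup>2" for s
  have sub: "{t<..} \<subseteq> {t0..}" using assms by auto
  have E_deriv: "(E has_real_derivative E t * (2 * eps t)) (at t within {t0..})"
    unfolding E_def
    by (rule derivative_eq_intros has_real_derivative_integral_from[OF eps_continuous assms(1)]
        | simp)+
  have N_deriv: "(N has_real_derivative 2 * inner (Z' t) (Z t)) (at t within {t0..})"
    unfolding N_def using has_real_derivative_norm_diff_sq[OF Z_deriv[OF assms(1)], of 0] by simp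
  have "((\<lambda>s. E s * (eps' s * N s)) has_real_derivative
      E t * (2 * eps t) * (eps' t * N t) + E t * (D * N t + eps' t * (2 * inner (Z' t) (Z t))))
      (at t within {t0..})"
    by (rule derivative_eq_intros E_deriv eps'_deriv N_deriv | simp)+
  then have "dini_upper_le (\<lambda>s. E s * (norm (Z' s))\<^sup>2 + E s * (eps' s * N s)) t
      ((E t * (- 2 * eps t * (norm (Z' t))\<^sup>2 - 2 * eps' t * inner (Z t) (Z' t))
         + E t * (2 * eps t) * (norm (Z' t))\<^sup>2)
       + (E t * (2 * eps t) * (eps' t * N t)
         + E t * (D * N t + eps' t * (2 * inner (Z' t) (Z t)))))"
    by (intro dini_upper_le_add dini_upper_le_mult_left[OF E_deriv sub]
        dini_upper_le_velocity_sq[OF assms(1)] has_real_derivative_imp_dini_upper_le[OF _ sub])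
      (simp_all add: E_def)
  moreover have "(\<lambda>s. E s * (norm (Z' s))\<^sup>2 + E s * (eps' s * N s)) = energy"
    by (simp add: fun_eq_iff energy_def E_def N_def distrib_left)
  ultimately show ?thesis
    by (simp add: E_def N_def algebra_simps inner_commute)
qed

lemma energy_nonincreasing:
  assumes eps'_deriv: "\<And>t. t \<ge> t0 \<Longrightarrow> (eps' has_real_derivative eps'' t) (at t within {t0..})"
    and "tp \<ge> t0" and decay: "\<And>t. t \<ge> tp \<Longrightarrow> 2 * eps t * eps' t + eps'' t \<le> 0" and "b \<ge> tp"
  shows "energy b \<le> energy tp"
proof (rule dini_upper_le_nonpos_imp_le[OF \<open>b \<ge> tp\<close>])
  have "continuous_on {t0..} (\<lambda>s. integral {t0..s} eps)"
    using has_real_derivative_integral_from[OF eps_continuous]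
    by (auto simp: continuous_on_eq_continuous_within intro: DERIV_continuous)
  then have "continuous_on {t0..} energy"
    unfolding energy_def using eps'_deriv Z_deriv Z'_cont
    by (intro continuous_intros)
      (auto simp: continuous_on_eq_continuous_within
        intro: DERIV_continuous has_vector_derivative_continuous)
  then show "continuous_on {tp..b} energy"
    by (rule continuous_on_subset) (use \<open>tp \<ge> t0\<close> in auto)
next
  fix t assume "t \<in> {tp..<b}"
  then have "t \<ge> t0" "t \<ge> tp" using \<open>tp \<ge> t0\<close> by auto
  have "exp (2 * integral {t0..t} eps) * (2 * eps t * eps' t + eps'' t) * (norm (Z t))\<^sup>2 \<le> 0"
    using decay[OF \<open>t \<ge> tp\<close>] by (intro mult_nonpos_nonneg mult_nonneg_nonpos) auto
  with dini_upper_le_energy[OF \<open>t \<ge> t0\<close> eps'_deriv[OF \<open>t \<ge> t0\<close>]]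
  show "dini_upper_le energy t 0"
    by (rule dini_upper_le_mono)
qed

lemma velocity_sq_bigo:
  assumes "F zs = 0"
    and eps'_deriv: "\<And>t. t \<ge> t0 \<Longrightarrow> (eps' has_real_derivative eps'' t) (at t within {t0..})"
    and eps_cond: "\<exists>tp\<ge>t0. \<forall>t\<ge>tp. (eps t)\<^sup>2 + eps' t \<ge> 0 \<and> 2 * eps t * eps' t + eps'' t \<le> 0"
  shows "(\<lambda>t. (norm (Z' t))\<^sup>2) \<in> O[at_top](\<lambda>t. exp (- 2 * integral {t0..t} eps) + (eps t)\<^sup>2)"
proof -
  obtain tp where "tp \<ge> t0"
    and tp: "\<And>t. t \<ge> tp \<Longrightarrow> (eps t)\<^sup>2 + eps' t \<ge> 0 \<and> 2 * eps t * eps' t + eps'' t \<le> 0"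
    using eps_cond by blast
  obtain B where B: "\<And>t. t \<ge> t0 \<Longrightarrow> norm (Z t) \<le> B"
    using trajectory_bounded[OF \<open>F zs = 0\<close>] by blast
  define c where "c = max (energy tp) (B\<^sup>2)"
  have "(norm (Z' t))\<^sup>2 \<le> c * (exp (- 2 * integral {t0..t} eps) + (eps t)\<^sup>2)" if t: "t \<ge> tp" for t
  proof -
    let ?w = "exp (- 2 * integral {t0..t} eps)"
    have "(norm (Z' t))\<^sup>2 = energy t * ?w + (- eps' t) * (norm (Z t))\<^sup>2"
      by (simp add: energy_def exp_minus field_simps)
    also have "\<dots> \<le> c * ?w + c * (eps t)\<^sup>2"
    proof (rule add_mono)
      show "energy t * ?w \<le> c * ?w"
        using energy_nonincreasing[OF eps'_deriv \<open>tp \<ge> t0\<close> _ t] tp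
        by (intro mult_right_mono) (auto simp: c_def)
      have "- eps' t \<le> (eps t)\<^sup>2"
        using tp[OF t] by simp
      moreover have "(norm (Z t))\<^sup>2 \<le> B\<^sup>2"
        using B[of t] t \<open>tp \<ge> t0\<close> by (simp add: power_mono)
      ultimately have "(- eps' t) * (norm (Z t))\<^sup>2 \<le> (eps t)\<^sup>2 * B\<^sup>2"
        by (rule mult_mono) auto
      also have "\<dots> \<le> c * (eps t)\<^sup>2"
        unfolding c_def
        by (subst mult.commute) (intro mult_right_mono max.cobounded2 zero_le_power2)
      finally show "(- eps' t) * (norm (Z t))\<^sup>2 \<le> c * (eps t)\<^sup>2" .
    qed
    also have "\<dots> = c * (?w + (eps t)\<^sup>2)"
      by (simp add: distrib_left)
    finally show ?thesis .
  qed
  then have "\<forall>\<^sub>F t in at_top.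
      norm ((norm (Z' t))\<^sup>2) \<le> c * norm (exp (- 2 * integral {t0..t} eps) + (eps t)\<^sup>2)"
    unfolding eventually_at_top_linorder by (intro exI[of _ tp]) simp
  then show ?thesis
    by (rule bigoI)
qed

end

theorem proposition4p2:
  fixes f :: "'a::{real_inner,complete_space} \<Rightarrow> real"
    and gradf :: "'a \<Rightarrow> 'a"
    and A :: "'a \<Rightarrow> 'b::{real_inner,complete_space}"
    and Astar :: "'b \<Rightarrow> 'a"
    and b :: 'b
    and eps eps' eps'' :: "real \<Rightarrow> real"
    and t0 :: real
    and x x' :: "real \<Rightarrow> 'a"
    and l l' :: "real \<Rightarrow> 'b"
  assumes f_convex: "convex_on UNIV f"
    and f_grad: "\<And>u. (f has_derivative (\<lambda>h. inner (gradf u) h)) (at u)"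
    and gradf_cont: "continuous_on UNIV gradf"
    and gradf_lip: "\<And>B. bounded B \<Longrightarrow> \<exists>K. K-lipschitz_on B gradf"
    and A_lin: "bounded_linear A"
    and A_adj: "\<And>u v. inner (A u) v = inner u (Astar v)"
    and t0_nonneg: "t0 \<ge> 0"
    and eps_pos: "\<And>t. t \<ge> t0 \<Longrightarrow> eps t > 0"
    and eps_d1: "\<And>t. t \<ge> t0 \<Longrightarrow> (eps has_real_derivative eps' t) (at t within {t0..})"
    and eps_d2: "\<And>t. t \<ge> t0 \<Longrightarrow> (eps' has_real_derivative eps'' t) (at t within {t0..})"
    and eps''_cont: "continuous_on {t0..} eps''"
    and eps_lim: "(eps \<longlongrightarrow> 0) at_top"
    and saddle_ne: "saddle_points f A b \<noteq> {}"
    and x_d: "\<And>t. t \<ge> t0 \<Longrightarrow> (x has_vector_derivative x' t) (at t within {t0..})"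
    and l_d: "\<And>t. t \<ge> t0 \<Longrightarrow> (l has_vector_derivative l' t) (at t within {t0..})"
    and x'_cont: "continuous_on {t0..} x'"
    and l'_cont: "continuous_on {t0..} l'"
    and eq1: "\<And>t. t \<ge> t0 \<Longrightarrow> x' t + gradf (x t) + Astar (l t) + eps t *\<^sub>R x t = 0"
    and eq2: "\<And>t. t \<ge> t0 \<Longrightarrow> l' t + b - A (x t) + eps t *\<^sub>R l t = 0"
    and eps_cond: "\<exists>tp\<ge>t0. \<forall>t\<ge>tp. (eps t)\<^sup>2 + eps' t \<ge> 0 \<and> 2 * eps t * eps' t + eps'' t \<le> 0"
  shows "(\<lambda>t. (norm (x' t, l' t))\<^sup>2)
           \<in> O[at_top](\<lambda>t. exp (- 2 * integral {t0..t} eps) + (eps t)\<^sup>2)"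
proof -
  interpret regularized_monotone_flow "lagrangian_operator gradf A Astar b" eps eps' t0
    "\<lambda>t. (x t, l t)" "\<lambda>t. (x' t, l' t)"
  proof
    show "monotone_operator (lagrangian_operator gradf A Astar b)"
      using monotone_operator_gradient[OF f_convex f_grad] A_adj
      by (rule monotone_operator_lagrangian_operator)
    show "\<exists>K. K-lipschitz_on B (lagrangian_operator gradf A Astar b)" if "bounded B" for B
      using gradf_lip A_lin bounded_linear_adjoint[OF A_lin A_adj] that
      by (rule lagrangian_operator_lipschitz_on_bounded)
    show "((\<lambda>t. (x t, l t)) has_vector_derivative (x' t, l' t)) (at t within {t0..})"
      if "t \<ge> t0" for t
      using x_d[OF that] l_d[OF that] by (rule has_vector_derivative_Pair)
    show "continuous_on {t0..} (\<lambda>t. (x' t, l' t))"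
      using x'_cont l'_cont by (rule continuous_on_Pair)
    show "(x' t, l' t) = - lagrangian_operator gradf A Astar b (x t, l t) - eps t *\<^sub>R (x t, l t)"
      if "t \<ge> t0" for t
      using eq1[OF that] eq2[OF that]
      by (simp add: lagrangian_operator_def prod_eq_iff eq_neg_iff_add_eq_0 algebra_simps)
  qed (use eps_pos eps_d1 in auto)
  obtain xs ls where "(xs, ls) \<in> saddle_points f A b"
    using saddle_ne by auto
  then have "lagrangian_operator gradf A Astar b (xs, ls) = 0"
    by (rule lagrangian_operator_saddle_point[OF f_grad A_lin A_adj])
  then show ?thesis
    using velocity_sq_bigo eps_d2 eps_cond by blast
qed

end
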